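(* Let $n$ be a positive integer and $\alpha\in[0,1]$, and let $G$ be a split graph that arises from the disjoint union of a clique $C$ of order $\alpha n$ and an independent set $I$ of order $(1-\alpha)n$ by adding $m$ edges between vertices in $C$ and vertices in $I$. Then $$Mo(G) \leq ((1+\alpha)n-1)m-\frac{2m^2}{(1-\alpha)n} \leq \begin{cases} \alpha(1-\alpha)n^2\big((1-\alpha)n-1\big) & \text{if } \alpha\leq \frac{1}{3}-\frac{1}{3n},\\[2mm] \frac{1}{8}(1-\alpha)n\big((1+\alpha)n-1\big)^2 & \text{if } \alpha>\frac{1}{3}-\frac{1}{3n}, \end{cases}$$ and moreover $Mo(G)\leq \frac{4}{27}n^3$.
   Context: All graphs are finite and simple. For a graph $G$ and an edge $uv$ of $G$, $n_G(u,v)$ denotes the number of vertices of $G$ whose distance in $G$ to $u$ is strictly smaller than their distance in $G$ to $v$. The Mostar index of $G$ is $Mo(G)=\sum_{uv\in E(G)}|n_G(u,v)-n_G(v,u)|$. Here $\alpha n$ and $(1-\alpha)n$ are the (integer) orders of $C$ and $I$. *)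

theory Defs
  imports Complex_Main "HOL-Library.Extended_Nat"
begin

definition simple_graph :: "'a set \<Rightarrow> ('a \<Rightarrow> 'a \<Rightarrow> bool) \<Rightarrow> bool" where
  "simple_graph V E \<longleftrightarrow> finite V \<and> (\<forall>x y. E x y \<longrightarrow> x \<in> V \<and> y \<in> V)
     \<and> (\<forall>x y. E x y \<longrightarrow> E y x) \<and> (\<forall>x. \<not> E x x)"

definition is_walk :: "('a \<Rightarrow> 'a \<Rightarrow> bool) \<Rightarrow> 'a list \<Rightarrow> bool" where
  "is_walk E xs \<longleftrightarrow> xs \<noteq> [] \<and> (\<forall>i. Suc i < length xs \<longrightarrow> E (xs ! i) (xs ! Suc i))"

text \<open>Graph distance (infinite if no walk exists); a one-vertex walk gives distance 0,
  which needs the vertex to lie in V.\<close>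
definition gdist :: "'a set \<Rightarrow> ('a \<Rightarrow> 'a \<Rightarrow> bool) \<Rightarrow> 'a \<Rightarrow> 'a \<Rightarrow> enat" where
  "gdist V E u v = (INF k \<in> {k. \<exists>xs. is_walk E xs \<and> set xs \<subseteq> V \<and> length xs = Suc k
                                \<and> hd xs = u \<and> last xs = v}. enat k)"

definition n_closer :: "'a set \<Rightarrow> ('a \<Rightarrow> 'a \<Rightarrow> bool) \<Rightarrow> 'a \<Rightarrow> 'a \<Rightarrow> nat" where
  "n_closer V E u v = card {w \<in> V. gdist V E w u < gdist V E w v}"

text \<open>Each unordered
  edge corresponds to exactly two ordered adjacent pairs, and the summand is symmetric,
  so we sum over ordered pairs and halve.\<close>
definition mostar :: "'a set \<Rightarrow> ('a \<Rightarrow> 'a \<Rightarrow> bool) \<Rightarrow> real" where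
  "mostar V E = (\<Sum>p \<in> {(u,v). u \<in> V \<and> v \<in> V \<and> E u v}.
       \<bar>real (n_closer V E (fst p) (snd p)) - real (n_closer V E (snd p) (fst p))\<bar>) / 2"

end

theory Submission
  imports Defs "HOL-Analysis.Convex"
begin

text \<open>
  Write \<open>d(x)\<close> for the number of clique neighbours of \<open>x \<in> I\<close>, so that \<open>m = \<Sum>x\<in>I. d(x)\<close>.
  For an edge \<open>uv\<close> with \<open>u \<in> C\<close>, \<open>v \<in> I\<close>, only \<open>v\<close> is closer to \<open>v\<close>, while \<open>v\<close> and the
  other clique neighbours of \<open>v\<close> are not closer to \<open>u\<close>; so the edge contributes at most
  \<open>n - 1 - d(v)\<close>. For an edge \<open>uv\<close> inside \<open>C\<close>, a vertex closer to \<open>u\<close> is \<open>u\<close> itself or a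
  vertex of \<open>I\<close> adjacent to \<open>u\<close> but not to \<open>v\<close>, so the edge contributes at most the number
  of vertices of \<open>I\<close> distinguishing \<open>u\<close> and \<open>v\<close>; over all ordered pairs of \<open>C\<close> this counts
  \<open>x \<in> I\<close> exactly \<open>2 d(x) (|C| - d(x))\<close> times. Hence
  \<open>Mo(G) \<le> \<Sum>x\<in>I. (n + |C| - 1) d(x) - 2 d(x)^2\<close>, and the Cauchy-Schwarz bound
  \<open>\<Sum>x\<in>I. d(x)^2 \<ge> m^2 / |I|\<close> gives the first inequality. The others maximise the concave
  quadratic \<open>(n + |C| - 1) m - 2 m^2 / |I|\<close> over \<open>0 \<le> m \<le> |C| |I|\<close> and then over \<open>\<alpha>\<close>.
\<close>

section \<open>Distances in simple graphs\<close>

lemma gdist_le_walk: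
  assumes "is_walk E xs" "set xs \<subseteq> V" "hd xs = u" "last xs = v"
  shows "gdist V E u v \<le> enat (length xs - 1)"
proof -
  have "length xs = Suc (length xs - 1)"
    using assms(1) by (simp add: is_walk_def)
  then have "length xs - 1 \<in> {k. \<exists>xs. is_walk E xs \<and> set xs \<subseteq> V \<and> length xs = Suc k
                                \<and> hd xs = u \<and> last xs = v}"
    using assms by blast
  then show ?thesis unfolding gdist_def by (rule INF_lower)
qed

lemma gdist_refl: "x \<in> V \<Longrightarrow> gdist V E x x = 0"
  using gdist_le_walk[of E "[x]" V x x] by (simp add: is_walk_def flip: zero_enat_def)

lemma gdist_le_1:
  assumes "simple_graph V E" "E x y"
  shows "gdist V E x y \<le> 1"
  using assms gdist_le_walk[of E "[x, y]" V x y]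
  by (simp add: is_walk_def simple_graph_def one_enat_def less_Suc_eq)

lemma gdist_le_2:
  assumes "simple_graph V E" "E x y" "E y z"
  shows "gdist V E x z \<le> 2"
proof -
  have "is_walk E [x, y, z]"
    using assms(2,3) by (auto simp: is_walk_def less_Suc_eq nth_Cons split: nat.splits)
  moreover have "set [x, y, z] \<subseteq> V"
    using assms by (auto simp: simple_graph_def)
  ultimately show ?thesis
    using gdist_le_walk[of E "[x, y, z]" V x z] by (simp add: numeral_eq_enat numeral_2_eq_2)
qed

lemma walk_length_le_2:
  assumes "is_walk E xs" "length xs \<le> 2"
  shows "hd xs = last xs \<or> E (hd xs) (last xs)"
  using assms by (cases xs) (auto simp: is_walk_def le_Suc_eq length_Suc_conv)

lemma enat_le_gdist:
  assumes "\<And>xs. is_walk E xs \<Longrightarrow> hd xs = u \<Longrightarrow> last xs = v \<Longrightarrow> k < length xs"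
  shows "enat k \<le> gdist V E u v"
  unfolding gdist_def
proof (rule INF_greatest)
  fix j
  assume "j \<in> {j. \<exists>xs. is_walk E xs \<and> set xs \<subseteq> V \<and> length xs = Suc j \<and> hd xs = u \<and> last xs = v}"
  then obtain xs where "is_walk E xs" "length xs = Suc j" "hd xs = u" "last xs = v"
    by blast
  with assms show "enat k \<le> enat j"
    by fastforce
qed

lemma gdist_ge_1:
  assumes "u \<noteq> v"
  shows "1 \<le> gdist V E u v"
proof -
  have "1 < length xs" if "is_walk E xs" "hd xs = u" "last xs = v" for xs
    using that assms by (cases xs) (auto simp: is_walk_def)
  then show ?thesis
    using enat_le_gdist[of E u v 1 V] by (simp add: one_enat_def)
qed

lemma gdist_ge_2:
  assumes "u \<noteq> v" "\<not> E u v"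
  shows "2 \<le> gdist V E u v"
proof -
  have "2 < length xs" if "is_walk E xs" "hd xs = u" "last xs = v" for xs
    using that assms walk_length_le_2[of E xs] by fastforce
  then show ?thesis
    using enat_le_gdist[of E u v 2 V] by (simp add: numeral_eq_enat)
qed

lemma gdist_finite_imp_neighbour:
  assumes "gdist V E u v \<noteq> \<infinity>" "u \<noteq> v"
  obtains z where "E u z"
proof -
  have "{k. \<exists>xs. is_walk E xs \<and> set xs \<subseteq> V \<and> length xs = Suc k \<and> hd xs = u \<and> last xs = v} \<noteq> {}"
    using assms(1) unfolding gdist_def by (metis INF_empty top_enat_def)
  then obtain xs where xs: "is_walk E xs" "hd xs = u" "last xs = v"
    by blast
  then have "Suc 0 < length xs"
    using assms(2) by (cases xs) (auto simp: is_walk_def)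
  then have "E u (xs ! 1)"
    using xs by (auto simp: is_walk_def hd_conv_nth)
  then show thesis
    by (rule that)
qed

section \<open>Vertices closer to one end of an edge\<close>

definition closer :: "'a set \<Rightarrow> ('a \<Rightarrow> 'a \<Rightarrow> bool) \<Rightarrow> 'a \<Rightarrow> 'a \<Rightarrow> 'a set" where
  "closer V E u v = {w \<in> V. gdist V E w u < gdist V E w v}"

lemma n_closer_eq_card_closer: "n_closer V E u v = card (closer V E u v)"
  by (simp add: n_closer_def closer_def)

lemma finite_closer: "finite V \<Longrightarrow> finite (closer V E u v)"
  by (simp add: closer_def)

lemma self_in_closer:
  assumes "u \<in> V" "u \<noteq> v"
  shows "u \<in> closer V E u v"
proof -
  have "gdist V E u u = 0"
    using assms(1) by (rule gdist_refl)
  moreover have "1 \<le> gdist V E u v"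
    using assms(2) by (rule gdist_ge_1)
  ultimately have "gdist V E u u < gdist V E u v"
    by (metis order.strict_trans2 zero_less_one)
  then show ?thesis
    using assms(1) by (simp add: closer_def)
qed

lemma one_le_n_closer:
  assumes "finite V" "u \<in> V" "u \<noteq> v"
  shows "1 \<le> n_closer V E u v"
  using self_in_closer[OF assms(2,3), of E] finite_closer[OF assms(1), of E u v]
  by (auto simp: n_closer_eq_card_closer Suc_le_eq card_gt_0_iff)

lemma target_notin_closer: "v \<in> V \<Longrightarrow> v \<notin> closer V E u v"
  by (simp add: closer_def gdist_refl)

lemma closer_not_adjacent:
  assumes "simple_graph V E" "w \<in> closer V E u v" "w \<noteq> u"
  shows "\<not> E w v"
proof
  assume "E w v"
  with assms(1) have "gdist V E w v \<le> 1"
    by (rule gdist_le_1)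
  moreover have "1 \<le> gdist V E w u"
    using assms(3) by (rule gdist_ge_1)
  moreover have "gdist V E w u < gdist V E w v"
    using assms(2) by (simp add: closer_def)
  ultimately show False
    by order
qed

lemma closer_adjacent_if_near_target:
  assumes "simple_graph V E" "w \<in> closer V E u v" "E w z" "z = v \<or> E z v"
  shows "w = u \<or> E w u"
proof (rule ccontr)
  assume "\<not> (w = u \<or> E w u)"
  then have "2 \<le> gdist V E w u"
    by (intro gdist_ge_2) auto
  moreover have "gdist V E w v \<le> 2"
    using assms(4)
  proof
    assume "z = v"
    then have "gdist V E w v \<le> 1"
      using assms(1,3) by (simp add: gdist_le_1)
    then show ?thesis
      by (simp add: order_trans[OF _ one_le_numeral])
  next
    assume "E z v"
    with assms(1,3) show ?thesis
      by (rule gdist_le_2)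
  qed
  moreover have "gdist V E w u < gdist V E w v"
    using assms(2) by (simp add: closer_def)
  ultimately show False
    by order
qed

lemma closer_has_neighbour:
  assumes "w \<in> closer V E u v" "w \<noteq> u"
  obtains z where "E w z"
proof -
  have "gdist V E w u < gdist V E w v"
    using assms(1) by (simp add: closer_def)
  then have "gdist V E w u \<noteq> \<infinity>"
    by (metis enat_ord_simps(6))
  then show thesis
    using assms(2) that by (rule gdist_finite_imp_neighbour)
qed

section \<open>The Mostar index as a double sum\<close>

definition edge_imbalance :: "'a set \<Rightarrow> ('a \<Rightarrow> 'a \<Rightarrow> bool) \<Rightarrow> 'a \<Rightarrow> 'a \<Rightarrow> real" where
  "edge_imbalance V E u v =
     (if E u v then \<bar>real (n_closer V E u v) - real (n_closer V E v u)\<bar> else 0)"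

lemma edge_imbalance_commute:
  "simple_graph V E \<Longrightarrow> edge_imbalance V E u v = edge_imbalance V E v u"
  by (auto simp: edge_imbalance_def simple_graph_def abs_minus_commute)

lemma mostar_eq_double_sum:
  assumes "finite V"
  shows "mostar V E = (\<Sum>u\<in>V. \<Sum>v\<in>V. edge_imbalance V E u v) / 2"
proof -
  have "{(u, v). u \<in> V \<and> v \<in> V \<and> E u v} = {p \<in> V \<times> V. E (fst p) (snd p)}"
    by auto
  then show ?thesis
    using assms unfolding mostar_def edge_imbalance_def
    by (simp add: sum.inter_filter sum.cartesian_product case_prod_beta)
qed

lemma sum_Un_square_symmetric:
  fixes F :: "'a \<Rightarrow> 'a \<Rightarrow> 'b::comm_semiring_1"
  assumes "finite A" "finite B" "A \<inter> B = {}" "\<And>x y. F x y = F y x"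
  shows "(\<Sum>x\<in>A \<union> B. \<Sum>y\<in>A \<union> B. F x y)
    = (\<Sum>x\<in>A. \<Sum>y\<in>A. F x y) + 2 * (\<Sum>x\<in>A. \<Sum>y\<in>B. F x y) + (\<Sum>x\<in>B. \<Sum>y\<in>B. F x y)"
proof -
  have "(\<Sum>x\<in>B. \<Sum>y\<in>A. F x y) = (\<Sum>x\<in>A. \<Sum>y\<in>B. F x y)"
    by (subst sum.swap) (simp add: assms(4))
  then show ?thesis
    using assms(1-3) by (simp add: sum.union_disjoint sum.distrib algebra_simps mult_2)
qed

lemma card_pairs_disagree:
  assumes "finite A"
  shows "card {p \<in> A \<times> A. P (fst p) \<noteq> P (snd p)}
    = 2 * card {x \<in> A. P x} * (card A - card {x \<in> A. P x})"
proof -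
  let ?Y = "{x \<in> A. P x}" and ?N = "{x \<in> A. \<not> P x}"
  have "{p \<in> A \<times> A. P (fst p) \<noteq> P (snd p)} = ?Y \<times> ?N \<union> ?N \<times> ?Y"
    by auto
  moreover have "card (?Y \<times> ?N \<union> ?N \<times> ?Y) = card (?Y \<times> ?N) + card (?N \<times> ?Y)"
    using assms by (intro card_Un_disjoint) auto
  moreover have "card ?N = card A - card ?Y"
    using assms by (subst card_Diff_subset[symmetric]) (auto intro: arg_cong[where f = card])
  ultimately show ?thesis
    by (simp add: card_cartesian_product)
qed

section \<open>Split graphs\<close>

locale split_graph =
  fixes V C I :: "'a set" and E :: "'a \<Rightarrow> 'a \<Rightarrow> bool"
  assumes simple: "simple_graph V E"
    and partition: "V = C \<union> I" "C \<inter> I = {}"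
    and clique: "\<forall>x\<in>C. \<forall>y\<in>C. x \<noteq> y \<longrightarrow> E x y"
    and indep: "\<forall>x\<in>I. \<forall>y\<in>I. \<not> E x y"
begin

lemma finite_V: "finite V" and finite_C: "finite C" and finite_I: "finite I"
  using simple partition by (auto simp: simple_graph_def)

lemma edge_sym: "E x y \<Longrightarrow> E y x"
  using simple by (simp add: simple_graph_def)

lemma edge_irrefl: "\<not> E x x"
  using simple by (simp add: simple_graph_def)

lemma neighbour_of_indep_in_clique: "w \<in> I \<Longrightarrow> E w z \<Longrightarrow> z \<in> C"
  using simple partition indep unfolding simple_graph_def by blast

definition cdeg :: "'a \<Rightarrow> nat" where
  "cdeg x = card {u \<in> C. E u x}"

lemma cdeg_le_card_C: "cdeg x \<le> card C"
  unfolding cdeg_def using finite_C by (intro card_mono) auto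

lemma closer_indep_clique:
  assumes u: "u \<in> C" and v: "v \<in> I" and uv: "E u v"
  shows "closer V E v u = {v}"
proof -
  have "w = v" if w: "w \<in> closer V E v u" for w
  proof (rule ccontr)
    assume "w \<noteq> v"
    with w obtain z where wz: "E w z"
      by (rule closer_has_neighbour)
    have "w \<noteq> u"
      using w target_notin_closer[of u V E v] u partition by auto
    then have "\<not> E w u"
      using simple w \<open>w \<noteq> v\<close> closer_not_adjacent by metis
    then have "w \<in> I"
      using w u \<open>w \<noteq> u\<close> clique partition by (auto simp: closer_def)
    then have "z = u \<or> E z u"
      using wz u clique neighbour_of_indep_in_clique by blast
    with simple w wz have "w = v \<or> E w v"
      by (rule closer_adjacent_if_near_target)
    then show False
      using \<open>w \<noteq> v\<close> \<open>w \<in> I\<close> v indep by blast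
  qed
  moreover have "v \<in> closer V E v u"
    using v uv edge_irrefl partition by (intro self_in_closer) auto
  ultimately show ?thesis
    by blast
qed

lemma n_closer_clique_indep_le:
  assumes u: "u \<in> C" and v: "v \<in> I" and uv: "E u v"
  shows "n_closer V E u v + cdeg v \<le> card V"
proof -
  define D where "D = {w \<in> C. E w v}"
  define R where "R = insert v (D - {u})"
  have "finite D" "u \<in> D" "v \<notin> D"
    using finite_C u v uv partition by (auto simp: D_def)
  then have "card R = card D"
    unfolding R_def by (metis Diff_iff card.remove card_insert_disjoint finite_Diff)
  have "closer V E u v \<inter> R = {}"
    using target_notin_closer[of v V E u] closer_not_adjacent[OF simple, of _ u v] v partition
    unfolding R_def D_def by blast
  then have "card (closer V E u v) + card R = card (closer V E u v \<union> R)"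
    using finite_closer[OF finite_V] \<open>finite D\<close> unfolding R_def
    by (intro card_Un_disjoint[symmetric]) auto
  also have "\<dots> \<le> card V"
    using v partition finite_V by (intro card_mono) (auto simp: closer_def R_def D_def)
  finally show ?thesis
    using \<open>card R = card D\<close> by (simp add: n_closer_eq_card_closer cdeg_def D_def)
qed

lemma edge_imbalance_clique_indep_le:
  assumes u: "u \<in> C" and v: "v \<in> I"
  shows "edge_imbalance V E u v \<le> (if E u v then real (card V) - 1 - real (cdeg v) else 0)"
proof (cases "E u v")
  case True
  have "n_closer V E v u = 1"
    using closer_indep_clique[OF u v True] by (simp add: n_closer_eq_card_closer)
  moreover have "1 \<le> n_closer V E u v"
    using u True edge_irrefl partition finite_V by (intro one_le_n_closer) auto
  moreover have "n_closer V E u v + cdeg v \<le> card V"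
    using u v True by (rule n_closer_clique_indep_le)
  ultimately show ?thesis
    using True by (simp add: edge_imbalance_def)
qed (simp add: edge_imbalance_def)

lemma closer_clique_subset:
  assumes u: "u \<in> C" and v: "v \<in> C" and "u \<noteq> v"
  shows "closer V E u v \<subseteq> insert u {x \<in> I. E u x \<and> \<not> E v x}"
proof
  fix w
  assume w: "w \<in> closer V E u v"
  show "w \<in> insert u {x \<in> I. E u x \<and> \<not> E v x}"
  proof (cases "w = u")
    case False
    with simple w have "\<not> E w v"
      by (rule closer_not_adjacent)
    moreover have "w \<noteq> v"
      using w target_notin_closer[of v V E u] v partition by auto
    ultimately have "w \<in> I"
      using w v clique partition by (auto simp: closer_def)
    obtain z where wz: "E w z"
      using w False by (rule closer_has_neighbour)
    then have "z = v \<or> E z v"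
      using \<open>w \<in> I\<close> v clique neighbour_of_indep_in_clique by blast
    then have "E w u"
      using closer_adjacent_if_near_target[OF simple w wz] False by blast
    then show ?thesis
      using \<open>w \<in> I\<close> \<open>\<not> E w v\<close> edge_sym by blast
  qed simp
qed

lemma edge_imbalance_clique_le:
  assumes u: "u \<in> C" and v: "v \<in> C"
  shows "edge_imbalance V E u v \<le> real (card {x \<in> I. E u x \<noteq> E v x})"
proof (cases "u = v")
  case False
  define A where "A = {x \<in> I. E u x \<and> \<not> E v x}"
  define B where "B = {x \<in> I. E v x \<and> \<not> E u x}"
  have "finite A" "finite B"
    using finite_I by (simp_all add: A_def B_def)
  have "n_closer V E u v \<le> card (insert u A)"
    using closer_clique_subset[OF u v False] \<open>finite A\<close>
    by (simp add: n_closer_eq_card_closer A_def card_mono)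
  then have "n_closer V E u v \<le> Suc (card A)"
    using \<open>finite A\<close> by (simp add: card_insert_if split: if_splits)
  moreover have "n_closer V E v u \<le> card (insert v B)"
    using closer_clique_subset[OF v u] False \<open>finite B\<close>
    by (simp add: n_closer_eq_card_closer B_def card_mono)
  then have "n_closer V E v u \<le> Suc (card B)"
    using \<open>finite B\<close> by (simp add: card_insert_if split: if_splits)
  moreover have "1 \<le> n_closer V E u v" "1 \<le> n_closer V E v u"
    using one_le_n_closer[OF finite_V] u v False partition by auto
  moreover have "card {x \<in> I. E u x \<noteq> E v x} = card A + card B"
  proof -
    have "{x \<in> I. E u x \<noteq> E v x} = A \<union> B"
      by (auto simp: A_def B_def)
    then show ?thesis
      using \<open>finite A\<close> \<open>finite B\<close> by (simp add: card_Un_disjoint A_def B_def disjoint_iff)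
  qed
  ultimately show ?thesis
    unfolding edge_imbalance_def by (simp add: abs_le_iff)
qed (simp add: edge_imbalance_def edge_irrefl)

lemma sum_edge_imbalance_clique_le:
  "(\<Sum>u\<in>C. \<Sum>v\<in>C. edge_imbalance V E u v)
    \<le> (\<Sum>x\<in>I. 2 * real (cdeg x) * (real (card C) - real (cdeg x)))"
proof -
  have "(\<Sum>u\<in>C. \<Sum>v\<in>C. edge_imbalance V E u v)
      \<le> (\<Sum>u\<in>C. \<Sum>v\<in>C. real (card {x \<in> I. E u x \<noteq> E v x}))"
    by (intro sum_mono edge_imbalance_clique_le)
  also have "\<dots> = real (\<Sum>p\<in>C \<times> C. card {x \<in> I. E (fst p) x \<noteq> E (snd p) x})"
    by (simp add: sum.cartesian_product case_prod_beta)
  also have "\<dots> = real (\<Sum>x\<in>I. card {p \<in> C \<times> C. E (fst p) x \<noteq> E (snd p) x})"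
    using finite_C finite_I by (subst sum_multicount_gen) auto
  also have "\<dots> = (\<Sum>x\<in>I. real (card {p \<in> C \<times> C. E (fst p) x \<noteq> E (snd p) x}))"
    by (rule of_nat_sum)
  also have "\<dots> = (\<Sum>x\<in>I. 2 * real (cdeg x) * (real (card C) - real (cdeg x)))"
  proof (rule sum.cong[OF refl])
    fix x
    show "real (card {p \<in> C \<times> C. E (fst p) x \<noteq> E (snd p) x})
        = 2 * real (cdeg x) * (real (card C) - real (cdeg x))"
      using card_pairs_disagree[OF finite_C, of "\<lambda>u. E u x"] cdeg_le_card_C[of x]
      by (simp add: cdeg_def of_nat_diff)
  qed
  finally show ?thesis .
qed

lemma sum_edge_imbalance_clique_indep_le:
  "(\<Sum>u\<in>C. \<Sum>v\<in>I. edge_imbalance V E u v)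
    \<le> (\<Sum>v\<in>I. real (cdeg v) * (real (card V) - 1 - real (cdeg v)))"
proof -
  have "(\<Sum>u\<in>C. \<Sum>v\<in>I. edge_imbalance V E u v)
      \<le> (\<Sum>u\<in>C. \<Sum>v\<in>I. if E u v then real (card V) - 1 - real (cdeg v) else 0)"
    by (intro sum_mono edge_imbalance_clique_indep_le)
  also have "\<dots> = (\<Sum>v\<in>I. \<Sum>u\<in>C. if E u v then real (card V) - 1 - real (cdeg v) else 0)"
    by (rule sum.swap)
  also have "\<dots> = (\<Sum>v\<in>I. real (cdeg v) * (real (card V) - 1 - real (cdeg v)))"
    using finite_C by (simp add: cdeg_def flip: sum.inter_filter)
  finally show ?thesis .
qed

lemma card_crossing_edges_eq_sum_cdeg:
  "card {(x, y). x \<in> C \<and> y \<in> I \<and> E x y} = (\<Sum>y\<in>I. cdeg y)"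
proof -
  have "{(x, y). x \<in> C \<and> y \<in> I \<and> E x y} = (SIGMA x:C. {y \<in> I. E x y})"
    by auto
  then have "card {(x, y). x \<in> C \<and> y \<in> I \<and> E x y} = (\<Sum>x\<in>C. card {y \<in> I. E x y})"
    using finite_C finite_I by simp
  also have "\<dots> = (\<Sum>y\<in>I. cdeg y)"
    unfolding cdeg_def using finite_C finite_I by (intro sum_multicount_gen) auto
  finally show ?thesis .
qed

lemma card_crossing_edges_le: "card {(x, y). x \<in> C \<and> y \<in> I \<and> E x y} \<le> card C * card I"
proof -
  have "card {(x, y). x \<in> C \<and> y \<in> I \<and> E x y} \<le> card (C \<times> I)"
    using finite_C finite_I by (intro card_mono) auto
  then show ?thesis
    by (simp add: card_cartesian_product)
qed

lemma mostar_le_sum_cdeg: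
  "mostar V E \<le> (\<Sum>x\<in>I. (real (card V) + real (card C) - 1) * real (cdeg x) - 2 * real (cdeg x)^2)"
proof -
  let ?S = "\<lambda>A B. \<Sum>u\<in>A. \<Sum>v\<in>B. edge_imbalance V E u v"
  have "mostar V E = (?S C C + 2 * ?S C I + ?S I I) / 2"
    using mostar_eq_double_sum[OF finite_V] partition(1)
      sum_Un_square_symmetric[OF finite_C finite_I partition(2) edge_imbalance_commute[OF simple]]
    by simp
  moreover have "?S I I = 0"
    using indep by (simp add: edge_imbalance_def)
  ultimately have "mostar V E = ?S C C / 2 + ?S C I"
    by simp
  also have "\<dots> \<le> (\<Sum>x\<in>I. 2 * real (cdeg x) * (real (card C) - real (cdeg x))) / 2
      + (\<Sum>v\<in>I. real (cdeg v) * (real (card V) - 1 - real (cdeg v)))"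
    using sum_edge_imbalance_clique_le sum_edge_imbalance_clique_indep_le by linarith
  also have "\<dots> = (\<Sum>x\<in>I. (real (card V) + real (card C) - 1) * real (cdeg x) - 2 * real (cdeg x)^2)"
    unfolding sum_divide_distrib sum.distrib[symmetric]
    by (rule sum.cong) (simp_all add: field_simps power2_eq_square)
  finally show ?thesis .
qed

lemma mostar_le_crossing_edges:
  defines "m \<equiv> card {(x, y). x \<in> C \<and> y \<in> I \<and> E x y}"
  shows "mostar V E \<le> (real (card V) + real (card C) - 1) * m - 2 * (real m)^2 / card I"
proof -
  have m: "real m = (\<Sum>x\<in>I. real (cdeg x))"
    by (simp add: m_def card_crossing_edges_eq_sum_cdeg)
  have "(real m)^2 / card I \<le> (\<Sum>x\<in>I. real (cdeg x)^2)"
    using sum_squared_le_sum_of_squares[of "\<lambda>x. real (cdeg x)" I]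
    by (simp add: m divide_le_eq sum_nonneg)
  moreover have "(\<Sum>x\<in>I. (real (card V) + real (card C) - 1) * real (cdeg x) - 2 * real (cdeg x)^2)
      = (real (card V) + real (card C) - 1) * m - 2 * (\<Sum>x\<in>I. real (cdeg x)^2)"
    by (simp add: m sum_subtractf sum_distrib_left)
  ultimately show ?thesis
    using mostar_le_sum_cdeg by linarith
qed

end

section \<open>The extremal quadratic\<close>

lemma quadratic_mono_below_vertex:
  fixes A K M i :: real
  assumes "0 < i" "0 \<le> M" "M \<le> K" "4 * K \<le> A * i"
  shows "A * M - 2 * M^2 / i \<le> A * K - 2 * K^2 / i"
proof -
  have "(A * K - 2 * K^2 / i) - (A * M - 2 * M^2 / i) = (K - M) * (A - 2 * (K + M) / i)"
    using assms(1) by (simp add: field_simps power2_eq_square)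
  moreover have "2 * (K + M) / i \<le> A"
    using assms by (simp add: divide_le_eq)
  ultimately show ?thesis
    using assms(3) by (smt (verit) mult_nonneg_nonneg)
qed

lemma quadratic_le_vertex_value:
  fixes A M i :: real
  assumes "0 < i"
  shows "A * M - 2 * M^2 / i \<le> i * A^2 / 8"
proof -
  have "i * A^2 / 8 - (A * M - 2 * M^2 / i) = (A * i - 4 * M)^2 / (8 * i)"
    using assms by (simp add: field_simps power2_eq_square)
  moreover have "0 \<le> (A * i - 4 * M)^2 / (8 * i)"
    using assms by simp
  ultimately show ?thesis
    by linarith
qed

lemma mult_one_minus_squared_le:
  fixes a :: real
  assumes "0 \<le> a" "a \<le> 1"
  shows "a * (1 - a)^2 \<le> 4/27"
proof -
  have "4/27 - a * (1 - a)^2 = (3 * a - 1)^2 * (4 - 3 * a) / 27"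
    by (simp add: power2_eq_square algebra_simps)
  moreover have "0 \<le> (3 * a - 1)^2 * (4 - 3 * a) / 27"
    using assms by simp
  ultimately show ?thesis
    by linarith
qed

lemma one_minus_mult_one_plus_squared_le:
  fixes a :: real
  assumes "0 \<le> a" "a \<le> 1"
  shows "(1 - a) * (1 + a)^2 \<le> 32/27"
proof -
  have "32/27 - (1 - a) * (1 + a)^2 = (3 * a - 1)^2 * (3 * a + 5) / 27"
    by (simp add: power2_eq_square algebra_simps)
  moreover have "0 \<le> (3 * a - 1)^2 * (3 * a + 5) / 27"
    using assms by simp
  ultimately show ?thesis
    by linarith
qed

lemma crossing_bound_le_piecewise:
  fixes n :: nat and \<alpha> M :: real
  assumes n: "0 < n" and \<alpha>: "0 \<le> \<alpha>" "\<alpha> \<le> 1"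
    and M: "0 \<le> M" "M \<le> \<alpha> * (1 - \<alpha>) * (real n)^2"
  shows "((1 + \<alpha>) * n - 1) * M - 2 * M^2 / ((1 - \<alpha>) * n)
    \<le> (if \<alpha> \<le> 1/3 - 1 / (3 * real n)
        then \<alpha> * (1 - \<alpha>) * (real n)^2 * ((1 - \<alpha>) * n - 1)
        else 1/8 * (1 - \<alpha>) * n * ((1 + \<alpha>) * n - 1)^2)"
proof (cases "\<alpha> = 1")
  case True
  \<comment> \<open>then \<open>M = 0\<close>, and the division by \<open>(1 - \<alpha>) * n = 0\<close> yields \<open>0\<close>\<close>
  then show ?thesis
    using n M by (simp add: field_simps)
next
  case False
  define i where "i = (1 - \<alpha>) * real n"
  define K where "K = \<alpha> * (1 - \<alpha>) * (real n)^2"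
  have i: "0 < i"
    using n \<alpha> False by (simp add: i_def)
  show ?thesis
  proof (cases "\<alpha> \<le> 1/3 - 1 / (3 * real n)")
    case True
    then have "0 \<le> real n - 1 - 3 * \<alpha> * n"
      using n by (simp add: field_simps)
    moreover have "((1 + \<alpha>) * n - 1) * i - 4 * K = i * (real n - 1 - 3 * \<alpha> * n)"
      by (simp add: i_def K_def power2_eq_square algebra_simps)
    ultimately have "4 * K \<le> ((1 + \<alpha>) * n - 1) * i"
      using i by (smt (verit) mult_nonneg_nonneg)
    then have "((1 + \<alpha>) * n - 1) * M - 2 * M^2 / i \<le> ((1 + \<alpha>) * n - 1) * K - 2 * K^2 / i"
      using i M by (intro quadratic_mono_below_vertex) (simp_all add: K_def)
    also have "\<dots> = \<alpha> * (1 - \<alpha>) * (real n)^2 * ((1 - \<alpha>) * n - 1)"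
    proof -
      have "K^2 = (\<alpha>^2 * (1 - \<alpha>) * (real n)^3) * i"
        by (simp add: K_def i_def power2_eq_square power3_eq_cube algebra_simps)
      then have "2 * K^2 / i = 2 * (\<alpha>^2 * (1 - \<alpha>) * (real n)^3)"
        using i by simp
      then show ?thesis
        unfolding K_def i_def by (simp add: power2_eq_square power3_eq_cube algebra_simps)
    qed
    finally show ?thesis
      using True by (simp add: i_def)
  next
    case False
    have "((1 + \<alpha>) * n - 1) * M - 2 * M^2 / i \<le> i * ((1 + \<alpha>) * n - 1)^2 / 8"
      using i by (rule quadratic_le_vertex_value)
    also have "\<dots> = 1/8 * (1 - \<alpha>) * n * ((1 + \<alpha>) * n - 1)^2"
      by (simp add: i_def)
    finally show ?thesis
      using False by (simp add: i_def)
  qed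
qed

lemma piecewise_le_cube:
  fixes n :: nat and \<alpha> :: real
  assumes n: "0 < n" and \<alpha>: "0 \<le> \<alpha>" "\<alpha> \<le> 1"
  shows "(if \<alpha> \<le> 1/3 - 1 / (3 * real n)
        then \<alpha> * (1 - \<alpha>) * (real n)^2 * ((1 - \<alpha>) * n - 1)
        else 1/8 * (1 - \<alpha>) * n * ((1 + \<alpha>) * n - 1)^2) \<le> 4/27 * (real n)^3"
proof -
  have "\<alpha> * (1 - \<alpha>) * (real n)^2 * ((1 - \<alpha>) * n - 1)
      = (\<alpha> * (1 - \<alpha>)^2) * (real n)^3 - \<alpha> * (1 - \<alpha>) * (real n)^2"
    by (simp add: power2_eq_square power3_eq_cube algebra_simps)
  moreover have "0 \<le> \<alpha> * (1 - \<alpha>) * (real n)^2"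
    using \<alpha> by simp
  ultimately have "\<alpha> * (1 - \<alpha>) * (real n)^2 * ((1 - \<alpha>) * n - 1) \<le> (\<alpha> * (1 - \<alpha>)^2) * (real n)^3"
    by linarith
  also have "\<dots> \<le> 4/27 * (real n)^3"
    using mult_one_minus_squared_le[OF \<alpha>] by (intro mult_right_mono) auto
  finally have small: "\<alpha> * (1 - \<alpha>) * (real n)^2 * ((1 - \<alpha>) * n - 1) \<le> 4/27 * (real n)^3" .
  have "1 \<le> real n" "0 \<le> \<alpha> * n"
    using n \<alpha> by simp_all
  then have "0 \<le> (1 + \<alpha>) * n - 1"
    by (simp add: algebra_simps)
  then have "((1 + \<alpha>) * n - 1)^2 \<le> ((1 + \<alpha>) * n)^2"
    by (intro power_mono) auto
  then have "1/8 * (1 - \<alpha>) * n * ((1 + \<alpha>) * n - 1)^2 \<le> 1/8 * (1 - \<alpha>) * n * ((1 + \<alpha>) * n)^2"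
    using \<alpha> by (intro mult_left_mono) auto
  also have "\<dots> = ((1 - \<alpha>) * (1 + \<alpha>)^2 / 8) * (real n)^3"
    by (simp add: power2_eq_square power3_eq_cube)
  also have "\<dots> \<le> 4/27 * (real n)^3"
    using one_minus_mult_one_plus_squared_le[OF \<alpha>] by (intro mult_right_mono) auto
  finally show ?thesis
    using small by simp
qed

theorem theorem2:
  fixes V C I :: "'a set" and E :: "'a \<Rightarrow> 'a \<Rightarrow> bool"
    and n m :: nat and \<alpha> :: real
  assumes n_pos: "n > 0"
    and alpha: "0 \<le> \<alpha>" "\<alpha> \<le> 1"
    and graph: "simple_graph V E"
    and split: "V = C \<union> I" "C \<inter> I = {}"
    and cardC: "real (card C) = \<alpha> * real n"
    and cardI: "real (card I) = (1 - \<alpha>) * real n"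
    and clique: "\<forall>x\<in>C. \<forall>y\<in>C. x \<noteq> y \<longrightarrow> E x y"
    and indep: "\<forall>x\<in>I. \<forall>y\<in>I. \<not> E x y"
    and m_def: "m = card {(x, y). x \<in> C \<and> y \<in> I \<and> E x y}"
  shows "mostar V E \<le> ((1 + \<alpha>) * n - 1) * m - 2 * (real m)^2 / ((1 - \<alpha>) * n)
    \<and> ((1 + \<alpha>) * n - 1) * m - 2 * (real m)^2 / ((1 - \<alpha>) * n)
        \<le> (if \<alpha> \<le> 1/3 - 1 / (3 * real n)
            then \<alpha> * (1 - \<alpha>) * (real n)^2 * ((1 - \<alpha>) * n - 1)
            else 1/8 * (1 - \<alpha>) * n * ((1 + \<alpha>) * n - 1)^2)
    \<and> mostar V E \<le> 4/27 * (real n)^3"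
proof -
  interpret split_graph V C I E
    using graph split clique indep by unfold_locales
  have "card V = card C + card I"
    using split finite_C finite_I by (simp add: card_Un_disjoint)
  then have "real (card V) + real (card C) - 1 = (1 + \<alpha>) * n - 1"
    using cardC cardI by (simp add: algebra_simps)
  then have first: "mostar V E \<le> ((1 + \<alpha>) * n - 1) * m - 2 * (real m)^2 / ((1 - \<alpha>) * n)"
    using mostar_le_crossing_edges cardI by (simp add: m_def)
  have "real m \<le> real (card C) * real (card I)"
    using card_crossing_edges_le by (simp add: m_def flip: of_nat_mult)
  then have "real m \<le> \<alpha> * (1 - \<alpha>) * (real n)^2"
    by (simp add: cardC cardI power2_eq_square algebra_simps)
  then have second: "((1 + \<alpha>) * n - 1) * m - 2 * (real m)^2 / ((1 - \<alpha>) * n)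
      \<le> (if \<alpha> \<le> 1/3 - 1 / (3 * real n)
          then \<alpha> * (1 - \<alpha>) * (real n)^2 * ((1 - \<alpha>) * n - 1)
          else 1/8 * (1 - \<alpha>) * n * ((1 + \<alpha>) * n - 1)^2)"
    using crossing_bound_le_piecewise[OF n_pos alpha] by simp
  show ?thesis
    using first second piecewise_le_cube[OF n_pos alpha] by linarith
qed

end
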